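(* Let $E,F,H$ be normed spaces over $\mathbb K$ with $H$ spherically complete. Let $f\colon E\to F$ be an immediate linear isometry and $g\colon E\to H$ a linear isometry. Then there exists a linear isometry $h\colon F\to H$ with $h\circ f=g$.
   Context: $\mathbb K$: nontrivially normed field with ultrametric absolute value; normed space over $\mathbb K$: normed vector space with $\|x+y\|\le\max(\|x\|,\|y\|)$. For $x\in F$ and a subspace $V$, $x\perp_m V$ means $\|x\|=\inf_{v\in V}\|x-v\|$. A linear isometry $f\colon E\to F$ is immediate if the only $v\in F$ with $v\perp_m \operatorname{Im}(f)$ is $v=0$. Spherically complete: every decreasing sequence of closed balls (radii $\ge0$) has nonempty intersection. *)

theory Defs
  imports Complex_Main
begin

definition nontriv_ultra_abs :: "('k::field \<Rightarrow> real) \<Rightarrow> bool" where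
  "nontriv_ultra_abs av \<longleftrightarrow>
     (\<forall>a. 0 \<le> av a) \<and> (\<forall>a. av a = 0 \<longleftrightarrow> a = 0) \<and>
     (\<forall>a b. av (a * b) = av a * av b) \<and>
     (\<forall>a b. av (a + b) \<le> max (av a) (av b)) \<and>
     (\<exists>a. av a \<noteq> 0 \<and> av a \<noteq> 1)"

definition ultra_normed_space ::
  "('k::field \<Rightarrow> real) \<Rightarrow> ('k \<Rightarrow> 'v::ab_group_add \<Rightarrow> 'v) \<Rightarrow> ('v \<Rightarrow> real) \<Rightarrow> bool" where
  "ultra_normed_space av sc nm \<longleftrightarrow>
     vector_space sc \<and>
     (\<forall>x. 0 \<le> nm x) \<and> (\<forall>x. nm x = 0 \<longleftrightarrow> x = 0) \<and>
     (\<forall>c x. nm (sc c x) = av c * nm x) \<and>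
     (\<forall>x y. nm (x + y) \<le> max (nm x) (nm y))"

definition linear_isometry ::
  "('k::field \<Rightarrow> 'a::ab_group_add \<Rightarrow> 'a) \<Rightarrow> ('a \<Rightarrow> real) \<Rightarrow>
   ('k \<Rightarrow> 'b::ab_group_add \<Rightarrow> 'b) \<Rightarrow> ('b \<Rightarrow> real) \<Rightarrow> ('a \<Rightarrow> 'b) \<Rightarrow> bool" where
  "linear_isometry sa na sb nb f \<longleftrightarrow>
     Vector_Spaces.linear sa sb f \<and> (\<forall>x. nb (f x) = na x)"

definition perp_m :: "('v::ab_group_add \<Rightarrow> real) \<Rightarrow> 'v \<Rightarrow> 'v set \<Rightarrow> bool" where
  "perp_m nm x V \<longleftrightarrow> nm x = (INF v\<in>V. nm (x - v))"

definition immediate ::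
  "('k::field \<Rightarrow> 'a::ab_group_add \<Rightarrow> 'a) \<Rightarrow> ('a \<Rightarrow> real) \<Rightarrow>
   ('k \<Rightarrow> 'b::ab_group_add \<Rightarrow> 'b) \<Rightarrow> ('b \<Rightarrow> real) \<Rightarrow> ('a \<Rightarrow> 'b) \<Rightarrow> bool" where
  "immediate sa na sb nb f \<longleftrightarrow>
     linear_isometry sa na sb nb f \<and> (\<forall>v. perp_m nb v (range f) \<longrightarrow> v = 0)"

definition cball_n :: "('v::ab_group_add \<Rightarrow> real) \<Rightarrow> 'v \<Rightarrow> real \<Rightarrow> 'v set" where
  "cball_n nm c r = {y. nm (y - c) \<le> r}"

definition spherically_complete :: "('v::ab_group_add \<Rightarrow> real) \<Rightarrow> bool" where
  "spherically_complete nm \<longleftrightarrow>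
     (\<forall>(c::nat \<Rightarrow> 'v) (r::nat \<Rightarrow> real).
        (\<forall>n. 0 \<le> r n) \<and> (\<forall>n. cball_n nm (c (Suc n)) (r (Suc n)) \<subseteq> cball_n nm (c n) (r n))
        \<longrightarrow> (\<Inter>n. cball_n nm (c n) (r n)) \<noteq> {})"

end

theory Submission
  imports Defs
begin

text \<open>By Zorn's lemma there is a maximal partial linear isometry F \<rightharpoonup> H extending g along f.
  If its domain missed some x, then immediacy of f shows that the distance from x to the domain is
  never attained (x - a is never orthogonal to the image of f). Spherical completeness of H then
  yields a point y at distance \<parallel>x - a\<parallel> from the image of every a in the domain, and x \<mapsto> y
  extends the isometry linearly, contradicting maximality.\<close>

lemma nontriv_ultra_abs_minus_one:
  assumes "nontriv_ultra_abs av"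
  shows "av (-1) = 1"
proof -
  have nonneg: "0 \<le> av a" and zero_iff: "av a = 0 \<longleftrightarrow> a = 0"
    and mult: "av (a * b) = av a * av b" for a b
    using assms unfolding nontriv_ultra_abs_def by auto
  have "av 1 = 1"
    using mult[of 1 1] zero_iff[of 1] by simp
  then have "av (-1) * av (-1) = 1"
    using mult[of "-1" "-1"] by simp
  then show ?thesis
    using nonneg[of "-1"] square_eq_1_iff[of "av (-1)"] by auto
qed

locale ultra_normed =
  fixes av :: "'k::field \<Rightarrow> real" and sc :: "'k \<Rightarrow> 'v::ab_group_add \<Rightarrow> 'v" and nm :: "'v \<Rightarrow> real"
  assumes abs_value: "nontriv_ultra_abs av" and normed: "ultra_normed_space av sc nm"
begin

lemma vector_space: "vector_space sc"
  using normed unfolding ultra_normed_space_def by blast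

sublocale vector_space sc
  by (rule vector_space)

lemma norm_ge_zero: "0 \<le> nm x"
  and norm_eq_zero_iff: "nm x = 0 \<longleftrightarrow> x = 0"
  and norm_scale: "nm (sc c x) = av c * nm x"
  and norm_add_le_max: "nm (x + y) \<le> max (nm x) (nm y)"
  using normed unfolding ultra_normed_space_def by auto

lemma norm_minus: "nm (- x) = nm x"
  using norm_scale[of "-1" x] nontriv_ultra_abs_minus_one[OF abs_value] by simp

lemma norm_minus_commute: "nm (x - y) = nm (y - x)"
  using norm_minus[of "x - y"] by simp

lemma norm_diff_le_max: "nm (x - y) \<le> max (nm x) (nm y)"
  using norm_add_le_max[of x "- y"] norm_minus[of y] by simp

lemma norm_diff_triangle_max: "nm (x - z) \<le> max (nm (x - y)) (nm (y - z))"
  using norm_add_le_max[of "x - y" "y - z"] by simp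

lemma norm_diff_eq_of_less:
  assumes "nm u < nm v"
  shows "nm (v - u) = nm v"
proof -
  have "nm v \<le> max (nm (v - u)) (nm u)"
    using norm_add_le_max[of "v - u" u] by simp
  moreover have "nm (v - u) \<le> nm v"
    using norm_diff_le_max[of v u] assms by linarith
  ultimately show ?thesis
    using assms by linarith
qed

end

lemma coinitial_sequence_without_minimum:
  fixes r :: "'a \<Rightarrow> real"
  assumes "S \<noteq> {}" and bdd: "bdd_below (r ` S)"
    and no_min: "\<And>p. p \<in> S \<Longrightarrow> \<exists>q\<in>S. r q < r p"
  obtains s where "\<And>n. s n \<in> S" and "\<And>n. r (s (Suc n)) \<le> r (s n)"
    and "\<And>p. p \<in> S \<Longrightarrow> \<exists>n. r (s n) < r p"
proof -
  define \<rho> where "\<rho> = Inf (r ` S)"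
  have above_inf: "\<rho> < r p" if "p \<in> S" for p
    using no_min[OF that] cInf_lower[OF _ bdd] unfolding \<rho>_def by (meson imageI le_less_trans)
  have approx: "\<exists>q\<in>S. r q < t" if "\<rho> < t" for t
    using that cInf_less_iff[of "r ` S"] assms(1) bdd unfolding \<rho>_def by auto
  define P where "P n q \<longleftrightarrow> q \<in> S \<and> r q < \<rho> + 1 / real (Suc n)" for n q
  have "\<exists>s. \<forall>n. P n (s n) \<and> r (s (Suc n)) \<le> r (s n)"
  proof (rule dependent_nat_choice)
    show "\<exists>q. P 0 q"
      using approx[of "\<rho> + 1"] unfolding P_def by auto
  next
    fix q n
    assume "P n q"
    then have "\<rho> < min (r q) (\<rho> + 1 / real (Suc (Suc n)))"
      using above_inf unfolding P_def by simp
    then obtain q' where "q' \<in> S" "r q' < min (r q) (\<rho> + 1 / real (Suc (Suc n)))"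
      using approx by blast
    then show "\<exists>q'. P (Suc n) q' \<and> r q' \<le> r q"
      unfolding P_def by auto
  qed
  then obtain s where s: "\<And>n. P n (s n)" and dec: "\<And>n. r (s (Suc n)) \<le> r (s n)"
    by blast
  have "\<exists>n. r (s n) < r p" if p: "p \<in> S" for p
  proof -
    obtain n where "inverse (real (Suc n)) < r p - \<rho>"
      using reals_Archimedean[of "r p - \<rho>"] above_inf[OF p] by auto
    then have "r (s n) < r p"
      using s[of n] unfolding P_def by (auto simp: inverse_eq_divide)
    then show ?thesis ..
  qed
  with s dec that show ?thesis
    unfolding P_def by blast
qed

locale ultra_normed_pair = F: ultra_normed av sF nF + H: ultra_normed av sH nH
  for av :: "'k::field \<Rightarrow> real"
    and sF :: "'k \<Rightarrow> 'f::ab_group_add \<Rightarrow> 'f" and nF :: "'f \<Rightarrow> real"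
    and sH :: "'k \<Rightarrow> 'h::ab_group_add \<Rightarrow> 'h" and nH :: "'h \<Rightarrow> real"
begin

text \<open>Along a minimising sequence the balls around the images, with the distances to x as radii,
  are nested; as the distance is never attained, every point of their intersection is at exactly
  the right distance from every image.\<close>
lemma isometric_point_extension:
  assumes complete: "spherically_complete nH" and "S \<noteq> {}"
    and iso: "\<And>a b a' b'. (a, b) \<in> S \<Longrightarrow> (a', b') \<in> S \<Longrightarrow> nH (b - b') = nF (a - a')"
    and no_min: "\<And>p. p \<in> S \<Longrightarrow> \<exists>q\<in>S. nF (x - fst q) < nF (x - fst p)"
  obtains y where "\<And>a b. (a, b) \<in> S \<Longrightarrow> nH (y - b) = nF (x - a)"
proof -
  define r where "r p = nF (x - fst p)" for p :: "'f \<times> 'h"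
  have "bdd_below (r ` S)"
    unfolding r_def by (rule bdd_belowI2) (rule F.norm_ge_zero)
  then obtain s where sS: "\<And>n. s n \<in> S" and dec: "\<And>n. r (s (Suc n)) \<le> r (s n)"
    and coinitial: "\<And>p. p \<in> S \<Longrightarrow> \<exists>n. r (s n) < r p"
    using coinitial_sequence_without_minimum[of S r] \<open>S \<noteq> {}\<close> no_min unfolding r_def by blast
  have image_dist: "nH (snd q - snd p) = nF ((x - fst p) - (x - fst q))" if "p \<in> S" "q \<in> S" for p q
    using iso[of "fst q" "snd q" "fst p" "snd p"] that by (simp add: algebra_simps)
  define c where "c n = snd (s n)" for n
  have "(\<Inter>n. cball_n nH (c n) (r (s n))) \<noteq> {}"
  proof (rule complete[unfolded spherically_complete_def, rule_format, of "\<lambda>n. r (s n)" c],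
      intro conjI allI subsetI)
    show "0 \<le> r (s n)" for n
      unfolding r_def by (rule F.norm_ge_zero)
  next
    fix n z
    assume "z \<in> cball_n nH (c (Suc n)) (r (s (Suc n)))"
    then have "nH (z - c (Suc n)) \<le> r (s n)"
      using dec[of n] unfolding cball_n_def by simp
    moreover have "nH (c (Suc n) - c n) \<le> r (s n)"
    proof -
      have "nH (c (Suc n) - c n) = nF ((x - fst (s n)) - (x - fst (s (Suc n))))"
        using image_dist[OF sS[of n] sS[of "Suc n"]] unfolding c_def .
      also have "\<dots> \<le> r (s n)"
        using F.norm_diff_le_max[of "x - fst (s n)" "x - fst (s (Suc n))"] dec[of n]
        unfolding r_def by (simp add: max_def)
      finally show ?thesis .
    qed
    ultimately show "z \<in> cball_n nH (c n) (r (s n))"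
      using H.norm_diff_triangle_max[of z "c n" "c (Suc n)"] unfolding cball_n_def by simp
  qed
  then obtain y where y: "\<And>n. nH (y - c n) \<le> r (s n)"
    unfolding cball_n_def by blast
  have "nH (y - b) = nF (x - a)" if ab: "(a, b) \<in> S" for a b
  proof -
    obtain n where n: "r (s n) < r (a, b)"
      using coinitial[OF ab] by blast
    have center: "nH (c n - b) = r (a, b)"
    proof -
      have "nH (c n - b) = nF ((x - a) - (x - fst (s n)))"
        using image_dist[OF ab sS] unfolding c_def by simp
      also have "\<dots> = nF (x - a)"
        using n unfolding r_def by (intro F.norm_diff_eq_of_less) simp
      finally show ?thesis
        unfolding r_def by simp
    qed
    have "nH (c n - y) < nH (c n - b)"
      using y[of n] n center H.norm_minus_commute[of y] by simp
    then have "nH ((c n - b) - (c n - y)) = nH (c n - b)"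
      by (rule H.norm_diff_eq_of_less)
    then show ?thesis
      using center unfolding r_def by simp
  qed
  with that show ?thesis by blast
qed

end

lemma immediate_imp_closer_to_range:
  assumes "immediate sE nE sF nF f" and "ultra_normed_space av sF nF" and "v \<noteq> 0"
  obtains e where "nF (v - f e) < nF v"
proof -
  have not_perp: "\<not> perp_m nF v (range f)"
    using assms(1,3) unfolding immediate_def by blast
  have f0: "f 0 = 0"
    using assms(1) module_hom.zero
    unfolding immediate_def linear_isometry_def linear_iff_module_hom by blast
  have bdd: "bdd_below ((\<lambda>u. nF (v - u)) ` range f)"
    using assms(2) unfolding ultra_normed_space_def by (intro bdd_belowI2) blast
  then have "(INF u\<in>range f. nF (v - u)) \<le> nF v"
    using cINF_lower[OF bdd, of "f 0"] f0 by simp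
  with not_perp have "(INF u\<in>range f. nF (v - u)) < nF v"
    unfolding perp_m_def by linarith
  with bdd that show ?thesis
    by (auto simp: cINF_less_iff)
qed

locale immediate_extension = ultra_normed_pair av sF nF sH nH
  for av :: "'k::field \<Rightarrow> real"
    and sF :: "'k \<Rightarrow> 'f::ab_group_add \<Rightarrow> 'f" and nF :: "'f \<Rightarrow> real"
    and sH :: "'k \<Rightarrow> 'h::ab_group_add \<Rightarrow> 'h" and nH :: "'h \<Rightarrow> real" +
  fixes sE :: "'k \<Rightarrow> 'e::ab_group_add \<Rightarrow> 'e" and nE :: "'e \<Rightarrow> real"
    and f :: "'e \<Rightarrow> 'f" and g :: "'e \<Rightarrow> 'h"
  assumes f_immediate: "immediate sE nE sF nF f"
    and g_isometry: "linear_isometry sE nE sH nH g"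
    and H_complete: "spherically_complete nH"
begin

sublocale f: Vector_Spaces.linear sE sF f
  using f_immediate unfolding immediate_def linear_isometry_def by blast

sublocale g: Vector_Spaces.linear sE sH g
  using g_isometry unfolding linear_isometry_def by blast

lemma norm_g_eq_norm_f: "nH (g e) = nF (f e)"
  using f_immediate g_isometry unfolding immediate_def linear_isometry_def by simp

text \<open>Partial linear isometries F \<rightharpoonup> H extending g along f, encoded by their graphs so that
  Zorn's lemma applies to them ordered by inclusion.\<close>
definition extension_relations :: "('f \<times> 'h) set set" where
  "extension_relations = {R.
     (\<forall>e. (f e, g e) \<in> R) \<and>
     (\<forall>a b a' b'. (a, b) \<in> R \<longrightarrow> (a', b') \<in> R \<longrightarrow> (a + a', b + b') \<in> R) \<and>
     (\<forall>a b c. (a, b) \<in> R \<longrightarrow> (sF c a, sH c b) \<in> R) \<and>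
     (\<forall>a b. (a, b) \<in> R \<longrightarrow> nH b = nF a)}"

lemma extension_relationsI:
  assumes "\<And>e. (f e, g e) \<in> R"
    and "\<And>a b a' b'. (a, b) \<in> R \<Longrightarrow> (a', b') \<in> R \<Longrightarrow> (a + a', b + b') \<in> R"
    and "\<And>a b c. (a, b) \<in> R \<Longrightarrow> (sF c a, sH c b) \<in> R"
    and "\<And>a b. (a, b) \<in> R \<Longrightarrow> nH b = nF a"
  shows "R \<in> extension_relations"
  using assms unfolding extension_relations_def by blast

context
  fixes R assumes R: "R \<in> extension_relations"
begin

lemma extension_relation_graph: "(f e, g e) \<in> R"
  and extension_relation_add: "(a, b) \<in> R \<Longrightarrow> (a', b') \<in> R \<Longrightarrow> (a + a', b + b') \<in> R"
  and extension_relation_scale: "(a, b) \<in> R \<Longrightarrow> (sF c a, sH c b) \<in> R"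
  and extension_relation_norm: "(a, b) \<in> R \<Longrightarrow> nH b = nF a"
  using R unfolding extension_relations_def by blast+

lemma extension_relation_diff:
  assumes "(a, b) \<in> R" "(a', b') \<in> R"
  shows "(a - a', b - b') \<in> R"
  using extension_relation_add[OF assms(1) extension_relation_scale[OF assms(2), of "-1"]] by simp

lemma extension_relation_norm_diff:
  "(a, b) \<in> R \<Longrightarrow> (a', b') \<in> R \<Longrightarrow> nH (b - b') = nF (a - a')"
  by (rule extension_relation_norm[OF extension_relation_diff])

lemma extension_relation_single_valued:
  assumes "(a, b) \<in> R" "(a, b') \<in> R"
  shows "b = b'"
  using extension_relation_norm_diff[OF assms] H.norm_eq_zero_iff[of "b - b'"]
    F.norm_eq_zero_iff[of 0]
  by simp

lemma extension_relation_no_nearest: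
  assumes "x \<notin> fst ` R" and p: "p \<in> R"
  shows "\<exists>q\<in>R. nF (x - fst q) < nF (x - fst p)"
proof -
  obtain a b where ab: "p = (a, b)"
    by fastforce
  have "x - a \<noteq> 0"
    using assms ab by force
  then obtain e where e: "nF (x - a - f e) < nF (x - a)"
    using immediate_imp_closer_to_range[OF f_immediate F.normed] by blast
  have "(a + f e, b + g e) \<in> R"
    using extension_relation_add[OF p[unfolded ab] extension_relation_graph] .
  with e ab show ?thesis
    by (intro bexI[of _ "(a + f e, b + g e)"]) (simp_all add: diff_diff_eq)
qed

text \<open>Adjoining x \<mapsto> y, the span of R and (x, y) stays isometric: for c \<noteq> 0,
  a + c x = c (x - a') with a' = -a/c, and (a', -b/c) \<in> R.\<close>
lemma extension_relation_adjoin: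
  assumes y: "\<And>a b. (a, b) \<in> R \<Longrightarrow> nH (y - b) = nF (x - a)"
  shows "{(a + sF c x, b + sH c y) | a b c. (a, b) \<in> R} \<in> extension_relations" (is "?R' \<in> _")
proof (rule extension_relationsI)
  fix e
  show "(f e, g e) \<in> ?R'"
    using extension_relation_graph
    by (intro CollectI exI[of _ "f e"] exI[of _ "g e"] exI[of _ 0]) simp
next
  fix p q p' q'
  assume "(p, q) \<in> ?R'" "(p', q') \<in> ?R'"
  then obtain a b c a' b' c' where ab: "(a, b) \<in> R" "(a', b') \<in> R"
    and "p = a + sF c x" "q = b + sH c y" "p' = a' + sF c' x" "q' = b' + sH c' y"
    by blast
  then show "(p + p', q + q') \<in> ?R'"
    using extension_relation_add[OF ab]
    by (intro CollectI exI[of _ "a + a'"] exI[of _ "b + b'"] exI[of _ "c + c'"])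
      (simp add: F.scale_left_distrib H.scale_left_distrib algebra_simps)
next
  fix p q k
  assume "(p, q) \<in> ?R'"
  then obtain a b c where ab: "(a, b) \<in> R" and "p = a + sF c x" "q = b + sH c y"
    by blast
  then show "(sF k p, sH k q) \<in> ?R'"
    using extension_relation_scale[OF ab]
    by (intro CollectI exI[of _ "sF k a"] exI[of _ "sH k b"] exI[of _ "k * c"])
      (simp add: F.scale_right_distrib H.scale_right_distrib)
next
  fix p q
  assume "(p, q) \<in> ?R'"
  then obtain a b c where ab: "(a, b) \<in> R" and pq: "p = a + sF c x" "q = b + sH c y"
    by blast
  have "nH (b + sH c y) = nF (a + sF c x)"
  proof (cases "c = 0")
    case True
    then show ?thesis
      using extension_relation_norm[OF ab] by simp
  next
    case False
    have "a + sF c x = sF c (x - sF (- 1 / c) a)" and "b + sH c y = sH c (y - sH (- 1 / c) b)"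
      using False
      by (simp_all add: F.scale_right_distrib H.scale_right_distrib add.commute)
    moreover have "nH (y - sH (- 1 / c) b) = nF (x - sF (- 1 / c) a)"
      using y[OF extension_relation_scale[OF ab]] .
    ultimately show ?thesis
      by (simp only: F.norm_scale H.norm_scale)
  qed
  then show "nH q = nF p"
    using pq by simp
qed

end

lemma graph_in_extension_relations: "range (\<lambda>e. (f e, g e)) \<in> extension_relations"
proof (rule extension_relationsI)
  fix a b a' b'
  assume "(a, b) \<in> range (\<lambda>e. (f e, g e))" "(a', b') \<in> range (\<lambda>e. (f e, g e))"
  then obtain e e' where "a = f e" "b = g e" "a' = f e'" "b' = g e'"
    by blast
  then show "(a + a', b + b') \<in> range (\<lambda>e. (f e, g e))"
    by (intro image_eqI[of _ _ "e + e'"]) (simp_all add: f.add g.add)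
next
  fix a b c
  assume "(a, b) \<in> range (\<lambda>e. (f e, g e))"
  then obtain e where "a = f e" "b = g e"
    by blast
  then show "(sF c a, sH c b) \<in> range (\<lambda>e. (f e, g e))"
    by (intro image_eqI[of _ _ "sE c e"]) (simp_all add: f.scale g.scale)
qed (auto simp: norm_g_eq_norm_f)

lemma extension_relations_chain_Union:
  assumes "C \<noteq> {}" and "subset.chain extension_relations C"
  shows "\<Union>C \<in> extension_relations"
proof (rule extension_relationsI)
  have C: "C \<subseteq> extension_relations"
    and chain: "\<And>X Y. X \<in> C \<Longrightarrow> Y \<in> C \<Longrightarrow> X \<subseteq> Y \<or> Y \<subseteq> X"
    using assms(2) unfolding subset_chain_def by auto
  show "(f e, g e) \<in> \<Union>C" for e
    using assms(1) C extension_relation_graph by blast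
  show "(a + a', b + b') \<in> \<Union>C" if ab: "(a, b) \<in> \<Union>C" "(a', b') \<in> \<Union>C" for a b a' b'
  proof -
    obtain X Y where "X \<in> C" "Y \<in> C" "(a, b) \<in> X" "(a', b') \<in> Y"
      using ab by blast
    then show ?thesis
      using chain[of X Y] C extension_relation_add by blast
  qed
  show "(sF c a, sH c b) \<in> \<Union>C" if "(a, b) \<in> \<Union>C" for a b c
    using that C extension_relation_scale by blast
  show "nH b = nF a" if "(a, b) \<in> \<Union>C" for a b
    using that C extension_relation_norm by blast
qed

lemma total_extension_relation_exists:
  obtains R where "R \<in> extension_relations" and "fst ` R = UNIV"
proof -
  obtain M where M: "M \<in> extension_relations"
    and maximal: "\<And>X. X \<in> extension_relations \<Longrightarrow> M \<subseteq> X \<Longrightarrow> X = M"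
    using subset_Zorn_nonempty[of extension_relations] graph_in_extension_relations
      extension_relations_chain_Union by blast
  have "x \<in> fst ` M" for x
  proof (rule ccontr)
    assume x: "x \<notin> fst ` M"
    obtain y where y: "\<And>a b. (a, b) \<in> M \<Longrightarrow> nH (y - b) = nF (x - a)"
      using isometric_point_extension[OF H_complete _ extension_relation_norm_diff[OF M]
          extension_relation_no_nearest[OF M x]] extension_relation_graph[OF M] by blast
    let ?M' = "{(a + sF c x, b + sH c y) | a b c. (a, b) \<in> M}"
    have "M \<subseteq> ?M'"
      by force
    then have "?M' = M"
      using maximal extension_relation_adjoin[OF M y] by blast
    moreover have "(x, y) \<in> ?M'"
      using extension_relation_graph[OF M, of 0]
      by (intro CollectI exI[of _ 0] exI[of _ 1]) simp
    ultimately show False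
      using x by force
  qed
  with M that show ?thesis
    by blast
qed

lemma linear_isometry_of_total_extension_relation:
  assumes R: "R \<in> extension_relations" and total: "fst ` R = UNIV"
  shows "\<exists>h. linear_isometry sF nF sH nH h \<and> h \<circ> f = g"
proof -
  define h where "h x = (SOME y. (x, y) \<in> R)" for x
  have graph: "(x, h x) \<in> R" for x
    using total someI_ex[of "\<lambda>y. (x, y) \<in> R"] unfolding h_def by force
  have h_eq: "h x = y" if "(x, y) \<in> R" for x y
    using extension_relation_single_valued[OF R graph that] .
  have "Vector_Spaces.linear sF sH h"
    unfolding Vector_Spaces.linear_iff
    using F.vector_space H.vector_space h_eq extension_relation_add[OF R graph graph]
      extension_relation_scale[OF R graph] by blast
  moreover have "nH (h x) = nF x" for x
    using extension_relation_norm[OF R graph] .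
  moreover have "h \<circ> f = g"
    using h_eq extension_relation_graph[OF R] by fastforce
  ultimately show ?thesis
    unfolding linear_isometry_def by blast
qed

end

theorem lemma6p2:
  fixes av :: "'k::field \<Rightarrow> real"
    and sE :: "'k \<Rightarrow> 'e::ab_group_add \<Rightarrow> 'e" and nE :: "'e \<Rightarrow> real"
    and sF :: "'k \<Rightarrow> 'f::ab_group_add \<Rightarrow> 'f" and nF :: "'f \<Rightarrow> real"
    and sH :: "'k \<Rightarrow> 'h::ab_group_add \<Rightarrow> 'h" and nH :: "'h \<Rightarrow> real"
    and f :: "'e \<Rightarrow> 'f" and g :: "'e \<Rightarrow> 'h"
  assumes "nontriv_ultra_abs av"
    and "ultra_normed_space av sE nE"
    and "ultra_normed_space av sF nF"
    and "ultra_normed_space av sH nH"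
    and "spherically_complete nH"
    and "immediate sE nE sF nF f"
    and "linear_isometry sE nE sH nH g"
  shows "\<exists>h. linear_isometry sF nF sH nH h \<and> h \<circ> f = g"
proof -
  interpret immediate_extension av sF nF sH nH sE nE f g
    using assms unfolding immediate_extension_def immediate_extension_axioms_def
      ultra_normed_pair_def ultra_normed_def by blast
  obtain R where "R \<in> extension_relations" and "fst ` R = UNIV"
    by (rule total_extension_relation_exists)
  then show ?thesis
    by (rule linear_isometry_of_total_extension_relation)
qed

end
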